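(* Let $M$ be a connected complex manifold and $\sigma : M\to M$ a biholomorphic map, inducing the automorphism $\widetilde{\sigma}(f) = f\circ\sigma^{-1}$ of $C(M)$. If $A\subseteq H(M)$ is a subalgebra of the algebra of holomorphic functions on $M$ that separates the points of $M$ and is invariant under $\widetilde{\sigma}$ and its inverse, then $A$ is maximal abelian in $A\rtimes_{\widetilde{\sigma}}\mathbb{Z}$ if and only if $\sigma$ is not of finite order.
   Context: $\sigma$ is of finite order if $\sigma^n = \mathrm{id}_M$ for some non-zero integer $n$. The crossed product $A \rtimes_{\widetilde{\sigma}} \mathbb{Z}$ is the set of finitely supported functions $\mathbb{Z}\to A$, written $\sum_n f_n\delta^n$, with pointwise linear operations and multiplication determined by $(f_n\delta^n)*(g_m\delta^m)=f_n\,\widetilde{\sigma}^n(g_m)\,\delta^{n+m}$; $A$ is embedded as $\{f_0\delta^0\}$. *)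

theory Defs
  imports "HOL-Analysis.Analysis"
begin

definition cscale :: "complex \<Rightarrow> complex^'n \<Rightarrow> complex^'n" where
  "cscale c v = (\<chi> i. c * v $ i)"

definition cholo_on :: "(complex^'n) set \<Rightarrow> (complex^'n \<Rightarrow> complex) \<Rightarrow> bool" where
  "cholo_on S f \<longleftrightarrow> (\<forall>x\<in>S. \<exists>f'. (f has_derivative f') (at x) \<and>
      (\<forall>c v. f' (cscale c v) = c * f' v))"

definition cholo_vec_on :: "(complex^'n) set \<Rightarrow> (complex^'n \<Rightarrow> complex^'m) \<Rightarrow> bool" where
  "cholo_vec_on S f \<longleftrightarrow> (\<forall>j. cholo_on S (\<lambda>x. f x $ j))"

section \<open>Complex manifolds (the manifold is the whole type 'a with its topology)\<close>

type_synonym ('a, 'n) chart = "'a set \<times> ('a \<Rightarrow> complex^'n)"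

definition is_chart :: "('a::topological_space, 'n::finite) chart \<Rightarrow> bool" where
  "is_chart c \<longleftrightarrow> (case c of (U, \<phi>) \<Rightarrow>
     open U \<and> open (\<phi> ` U) \<and> (\<exists>\<psi>. homeomorphism U (\<phi> ` U) \<phi> \<psi>))"

definition holo_atlas :: "('a::topological_space, 'n::finite) chart set \<Rightarrow> bool" where
  "holo_atlas At \<longleftrightarrow>
     (\<forall>c\<in>At. is_chart c) \<and>
     (\<Union>c\<in>At. fst c) = UNIV \<and>
     (\<forall>(U, \<phi>)\<in>At. \<forall>(V, \<psi>)\<in>At.
        cholo_vec_on (\<phi> ` (U \<inter> V)) (\<psi> \<circ> inv_into U \<phi>))"

definition connected_complex_manifold :: "('a::{t2_space, second_countable_topology}, 'n::finite) chart set \<Rightarrow> bool" where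
  "connected_complex_manifold At \<longleftrightarrow> holo_atlas At \<and> connected (UNIV :: 'a set)"

definition holo_fun :: "('a::topological_space, 'n::finite) chart set \<Rightarrow> ('a \<Rightarrow> complex) \<Rightarrow> bool" where
  "holo_fun At f \<longleftrightarrow> (\<forall>(U, \<phi>)\<in>At. cholo_on (\<phi> ` U) (f \<circ> inv_into U \<phi>))"

definition holo_map :: "('a::topological_space, 'n::finite) chart set \<Rightarrow> ('a \<Rightarrow> 'a) \<Rightarrow> bool" where
  "holo_map At g \<longleftrightarrow> continuous_on UNIV g \<and>
     (\<forall>(U, \<phi>)\<in>At. \<forall>(V, \<psi>)\<in>At.
        cholo_vec_on (\<phi> ` (U \<inter> g -` V)) (\<psi> \<circ> g \<circ> inv_into U \<phi>))"

definition biholomorphic :: "('a::topological_space, 'n::finite) chart set \<Rightarrow> ('a \<Rightarrow> 'a) \<Rightarrow> bool" where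
  "biholomorphic At g \<longleftrightarrow> bij g \<and> holo_map At g \<and> holo_map At (inv g)"

definition fun_ipow :: "('a \<Rightarrow> 'a) \<Rightarrow> int \<Rightarrow> 'a \<Rightarrow> 'a" where
  "fun_ipow s n = (if 0 \<le> n then s ^^ nat n else (inv s) ^^ nat (- n))"

definition finite_order :: "('a \<Rightarrow> 'a) \<Rightarrow> bool" where
  "finite_order s \<longleftrightarrow> (\<exists>n::int. n \<noteq> 0 \<and> fun_ipow s n = id)"

definition sig_tilde :: "('a \<Rightarrow> 'a) \<Rightarrow> ('a \<Rightarrow> complex) \<Rightarrow> ('a \<Rightarrow> complex)" where
  "sig_tilde s f = f \<circ> inv s"

definition sig_tilde_pow :: "('a \<Rightarrow> 'a) \<Rightarrow> int \<Rightarrow> ('a \<Rightarrow> complex) \<Rightarrow> ('a \<Rightarrow> complex)" where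
  "sig_tilde_pow s n f = f \<circ> fun_ipow s (- n)"

definition fun_subalgebra :: "('a \<Rightarrow> complex) set \<Rightarrow> bool" where
  "fun_subalgebra A \<longleftrightarrow> (\<lambda>x. 0) \<in> A \<and> (\<forall>f\<in>A. \<forall>g\<in>A. (\<lambda>x. f x + g x) \<in> A \<and> (\<lambda>x. f x * g x) \<in> A) \<and>
     (\<forall>c. \<forall>f\<in>A. (\<lambda>x. c * f x) \<in> A)"

definition separates_points :: "('a \<Rightarrow> complex) set \<Rightarrow> bool" where
  "separates_points A \<longleftrightarrow> (\<forall>x y. x \<noteq> y \<longrightarrow> (\<exists>f\<in>A. f x \<noteq> f y))"

text \<open>Elements: finitely supported functions Z -> A, sum_n F n delta^n.\<close>
definition crossed_product :: "('a \<Rightarrow> complex) set \<Rightarrow> (int \<Rightarrow> 'a \<Rightarrow> complex) set" where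
  "crossed_product A = {F. finite {n. F n \<noteq> (\<lambda>x. 0)} \<and> (\<forall>n. F n \<in> A)}"

text \<open>(f_n delta^n) * (g_m delta^m) = f_n sigma~^n(g_m) delta^(n+m), extended bilinearly.\<close>
definition cp_mult :: "('a \<Rightarrow> 'a) \<Rightarrow> (int \<Rightarrow> 'a \<Rightarrow> complex) \<Rightarrow> (int \<Rightarrow> 'a \<Rightarrow> complex) \<Rightarrow> (int \<Rightarrow> 'a \<Rightarrow> complex)" where
  "cp_mult s F G = (\<lambda>k x. \<Sum>n\<in>{n. F n \<noteq> (\<lambda>x. 0)}. F n x * sig_tilde_pow s n (G (k - n)) x)"

definition cp_embed :: "('a \<Rightarrow> complex) \<Rightarrow> (int \<Rightarrow> 'a \<Rightarrow> complex)" where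
  "cp_embed f = (\<lambda>n. if n = 0 then f else (\<lambda>x. 0))"

definition cp_subalgebra :: "('a \<Rightarrow> 'a) \<Rightarrow> ('a \<Rightarrow> complex) set \<Rightarrow> (int \<Rightarrow> 'a \<Rightarrow> complex) set \<Rightarrow> bool" where
  "cp_subalgebra s A B \<longleftrightarrow> B \<subseteq> crossed_product A \<and> (\<lambda>n x. 0) \<in> B \<and>
     (\<forall>F\<in>B. \<forall>G\<in>B. (\<lambda>n x. F n x + G n x) \<in> B \<and> cp_mult s F G \<in> B) \<and>
     (\<forall>c. \<forall>F\<in>B. (\<lambda>n x. c * F n x) \<in> B)"

definition cp_commutative :: "('a \<Rightarrow> 'a) \<Rightarrow> (int \<Rightarrow> 'a \<Rightarrow> complex) set \<Rightarrow> bool" where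
  "cp_commutative s B \<longleftrightarrow> (\<forall>F\<in>B. \<forall>G\<in>B. cp_mult s F G = cp_mult s G F)"

definition maximal_abelian :: "('a \<Rightarrow> 'a) \<Rightarrow> ('a \<Rightarrow> complex) set \<Rightarrow> bool" where
  "maximal_abelian s A \<longleftrightarrow> cp_commutative s (cp_embed ` A) \<and>
     (\<forall>B. cp_subalgebra s A B \<and> cp_commutative s B \<and> cp_embed ` A \<subseteq> B \<longrightarrow> B = cp_embed ` A)"

end

theory Submission
  imports Defs "HOL-Complex_Analysis.Conformal_Mappings"
begin

text \<open>
  If \<open>\<sigma>\<^sup>m = id\<close> with \<open>m > 0\<close>, then \<open>\<sigma>~\<^sup>n\<close> acts trivially for \<open>n \<in> m\<int>\<close>, so the elements of the
  crossed product supported on \<open>m\<int>\<close> multiply by plain convolution and form a commutative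
  subalgebra; it contains \<open>f \<delta>\<^sup>m\<close> for any nonzero \<open>f \<in> A\<close>, hence strictly contains \<open>A\<close>.

  Conversely, if \<open>F = \<Sum> F\<^sub>k \<delta>\<^sup>k\<close> commutes with every \<open>g \<in> A\<close>, comparing coefficients gives
  \<open>F\<^sub>k (g \<circ> \<sigma>\<^sup>-\<^sup>k - g) = 0\<close>; as \<open>A\<close> separates points, \<open>F\<^sub>k\<close> vanishes on the open set of points
  moved by \<open>\<sigma>\<^sup>-\<^sup>k\<close>. For \<open>k \<noteq> 0\<close> and \<open>\<sigma>\<close> of infinite order this set is nonempty, and the
  identity theorem on the connected manifold forces \<open>F\<^sub>k = 0\<close>. So the commutant of \<open>A\<close> is
  \<open>A\<close> itself, which makes \<open>A\<close> maximal abelian.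
\<close>

lemma linear_cscale: "linear (\<lambda>t::complex. cscale t w)"
  by (rule linearI) (auto simp: cscale_def vec_eq_iff distrib_right)

lemma has_derivative_complex_line:
  "((\<lambda>t::complex. z + cscale t w) has_derivative (\<lambda>h. cscale h w)) (at t)"
proof -
  have "((\<lambda>t::complex. cscale t w) has_derivative (\<lambda>h. cscale h w)) (at t)"
    by (rule bounded_linear_imp_has_derivative)
       (use linear_cscale linear_conv_bounded_linear in blast)
  thus ?thesis by (intro derivative_eq_intros) auto
qed

lemma cholo_on_subset: "cholo_on D f \<Longrightarrow> S \<subseteq> D \<Longrightarrow> cholo_on S f"
  by (auto simp: cholo_on_def)

lemma holomorphic_on_complex_line:
  assumes "cholo_on D f"
  shows "(\<lambda>t. f (z + cscale t w)) holomorphic_on {t. z + cscale t w \<in> D}"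
  unfolding holomorphic_on_def
proof
  fix t assume "t \<in> {t. z + cscale t w \<in> D}"
  then obtain f' where f': "(f has_derivative f') (at (z + cscale t w))"
    and clin: "\<forall>c v. f' (cscale c v) = c * f' v"
    using assms unfolding cholo_on_def by blast
  have "((\<lambda>t. f (z + cscale t w)) has_derivative (\<lambda>h. f' (cscale h w))) (at t)"
    using diff_chain_at[OF has_derivative_complex_line f'] by (simp add: o_def)
  moreover have "(\<lambda>h. f' (cscale h w)) = (*) (f' w)"
    using clin by (auto simp: fun_eq_iff)
  ultimately have "((\<lambda>t. f (z + cscale t w)) has_field_derivative f' w) (at t)"
    by (simp add: has_field_derivative_def)
  thus "(\<lambda>t. f (z + cscale t w)) field_differentiable at t within {t. z + cscale t w \<in> D}"
    using field_differentiable_at_within field_differentiable_def by blast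
qed

lemma cholo_on_analytic_continuation:
  fixes f :: "complex^'n \<Rightarrow> complex"
  assumes "cholo_on D f" "open D" "convex D"
    and "open W" "W \<noteq> {}" "W \<subseteq> D" "\<forall>x\<in>W. f x = 0"
    and "y \<in> D"
  shows "f y = 0"
proof -
  obtain z where "z \<in> W" using assms(5) by auto
  define L where "L = (\<lambda>t::complex. z + cscale t (y - z))"
  have L01: "L 0 = z" "L 1 = y" by (simp_all add: L_def cscale_def vec_eq_iff)
  have "continuous_on UNIV L"
    unfolding L_def
    by (intro continuous_at_imp_continuous_on ballI has_derivative_continuous[OF has_derivative_complex_line])
  hence "open (L -` D)" "open (L -` W)" using assms(2,4) by (simp_all add: open_vimage)
  have "L -` D = (\<lambda>t. cscale t (y - z)) -` ((\<lambda>x. x - z) ` D)"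
    by (force simp: L_def)
  hence "convex (L -` D)"
    by (simp add: convex_linear_vimage[OF linear_cscale convex_translation_subtract[OF assms(3)]])
  hence "connected (L -` D)" by (rule convex_connected)
  have "(f \<circ> L) 1 = 0"
  proof (rule analytic_continuation_open[where s = "L -` W" and s' = "L -` D" and f = "f \<circ> L" and g = "\<lambda>_. 0" and z = 1])
    show "L -` W \<noteq> {}" "L -` W \<subseteq> L -` D" "1 \<in> L -` D"
      using \<open>z \<in> W\<close> assms(6,8) L01 by auto
    show "f \<circ> L holomorphic_on L -` D"
      using holomorphic_on_complex_line[OF assms(1)] by (simp add: L_def o_def vimage_def)
  qed (use \<open>open (L -` D)\<close> \<open>open (L -` W)\<close> \<open>connected (L -` D)\<close> assms(7) in auto)
  thus ?thesis using L01 by simp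
qed

lemma holo_atlas_chart_at:
  assumes "holo_atlas At"
  obtains U \<phi> \<psi> where "(U, \<phi>) \<in> At" "p \<in> U" "open U" "open (\<phi> ` U)"
    "homeomorphism U (\<phi> ` U) \<phi> \<psi>"
proof -
  have "p \<in> (\<Union>c\<in>At. fst c)" using assms by (simp add: holo_atlas_def)
  then obtain U \<phi> where c: "(U, \<phi>) \<in> At" "p \<in> U" by auto
  hence "is_chart (U, \<phi>)" using assms by (auto simp: holo_atlas_def)
  thus ?thesis using that c by (auto simp: is_chart_def)
qed

lemma holo_fun_chart_analytic_continuation:
  fixes At :: "('a::topological_space, 'n::finite) chart set"
  assumes "holo_atlas At" "holo_fun At f" "(U, \<phi>) \<in> At" "ball c r \<subseteq> \<phi> ` U"
    and "open W" "W \<noteq> {}" "W \<subseteq> U \<inter> \<phi> -` ball c r" "\<forall>x\<in>W. f x = 0"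
    and "q \<in> U" "\<phi> q \<in> ball c r"
  shows "f q = 0"
proof -
  have "is_chart (U, \<phi>)" using assms(1,3) by (auto simp: holo_atlas_def)
  then obtain \<psi> where "open (\<phi> ` U)" and hom: "homeomorphism U (\<phi> ` U) \<phi> \<psi>"
    by (auto simp: is_chart_def)
  have inj: "inj_on \<phi> U" using hom by (metis homeomorphism_apply1 inj_on_inverseI)
  have "openin (top_of_set (\<phi> ` U)) (\<phi> ` W)"
    by (rule homeomorphism_imp_open_map[OF hom]) (use assms(5,7) in \<open>auto intro: open_subset\<close>)
  hence "open (\<phi> ` W)" using \<open>open (\<phi> ` U)\<close> openin_open_trans by blast
  have "cholo_on (ball c r) (f \<circ> inv_into U \<phi>)"
    using assms(2,3,4) by (auto simp: holo_fun_def intro: cholo_on_subset)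
  moreover have "\<phi> ` W \<noteq> {}" "\<phi> ` W \<subseteq> ball c r" "\<forall>x\<in>\<phi> ` W. (f \<circ> inv_into U \<phi>) x = 0"
    using assms(6-8) inj by auto
  ultimately have "(f \<circ> inv_into U \<phi>) (\<phi> q) = 0"
    using cholo_on_analytic_continuation[OF _ open_ball convex_ball \<open>open (\<phi> ` W)\<close>] assms(10)
    by blast
  thus ?thesis using inj assms(9) by simp
qed

lemma holo_fun_analytic_continuation:
  fixes At :: "('a::topological_space, 'n::finite) chart set"
  assumes "holo_atlas At" "connected (UNIV :: 'a set)" "holo_fun At f"
    and "open V" "V \<noteq> {}" "\<forall>x\<in>V. f x = 0"
  shows "f x = 0"
proof -
  define Z where "Z = {p. \<exists>N. open N \<and> p \<in> N \<and> (\<forall>q\<in>N. f q = 0)}"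
  have "open Z" unfolding Z_def by (subst open_subopen) blast
  have "closure Z \<subseteq> Z"
  proof
    fix p assume "p \<in> closure Z"
    obtain U \<phi> \<psi> where chart: "(U, \<phi>) \<in> At" "p \<in> U" "open U" "open (\<phi> ` U)"
      and hom: "homeomorphism U (\<phi> ` U) \<phi> \<psi>"
      using holo_atlas_chart_at[OF assms(1)] by blast
    obtain r where "r > 0" "ball (\<phi> p) r \<subseteq> \<phi> ` U"
      using chart by (meson imageI open_contains_ball)
    define N where "N = U \<inter> \<phi> -` ball (\<phi> p) r"
    have "continuous_on U \<phi>" using hom by (simp add: homeomorphism_def)
    hence "open (\<phi> -` ball (\<phi> p) r \<inter> U)"
      using continuous_on_open_vimage[OF \<open>open U\<close>] open_ball by blast
    hence "open N" by (simp add: N_def Int_commute)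
    have "p \<in> N" using \<open>r > 0\<close> chart by (simp add: N_def)
    hence "N \<inter> Z \<noteq> {}"
      using \<open>p \<in> closure Z\<close> \<open>open N\<close> open_Int_closure_eq_empty by blast
    have "N \<inter> Z \<subseteq> U \<inter> \<phi> -` ball (\<phi> p) r" "\<forall>x\<in>N \<inter> Z. f x = 0"
      by (auto simp: N_def Z_def)
    hence "\<forall>q\<in>N. f q = 0"
      using holo_fun_chart_analytic_continuation[OF assms(1,3) chart(1) \<open>ball (\<phi> p) r \<subseteq> \<phi> ` U\<close>
          open_Int[OF \<open>open N\<close> \<open>open Z\<close>] \<open>N \<inter> Z \<noteq> {}\<close>]
      unfolding N_def by blast
    thus "p \<in> Z" using \<open>open N\<close> \<open>p \<in> N\<close> by (auto simp: Z_def)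
  qed
  hence "closed Z" by (simp add: closure_subset_eq)
  moreover have "V \<subseteq> Z" using assms(4,6) by (auto simp: Z_def)
  ultimately have "Z = UNIV"
    using assms(2,5) \<open>open Z\<close> connected_clopen[of "UNIV :: 'a set"] by auto
  thus ?thesis by (auto simp: Z_def)
qed

lemma continuous_on_funpow:
  fixes g :: "'a::topological_space \<Rightarrow> 'a"
  assumes "continuous_on UNIV g"
  shows "continuous_on UNIV (g ^^ n)"
proof (induction n)
  case (Suc n)
  thus ?case using continuous_on_compose[OF Suc continuous_on_subset[OF assms]] by simp
qed (simp add: continuous_on_id)

lemma continuous_on_fun_ipow:
  fixes s :: "'a::topological_space \<Rightarrow> 'a"
  assumes "continuous_on UNIV s" "continuous_on UNIV (inv s)"
  shows "continuous_on UNIV (fun_ipow s n)"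
  using continuous_on_funpow[OF assms(1)] continuous_on_funpow[OF assms(2)]
  by (simp add: fun_ipow_def)

lemma fun_ipow_0 [simp]: "fun_ipow s 0 = id"
  by (simp add: fun_ipow_def)

lemma fun_ipow_eq_id_if_dvd:
  assumes "bij s" "s ^^ m = id" "int m dvd j"
  shows "fun_ipow s j = id"
proof -
  obtain q where q: "j = int m * q" using assms(3) by (auto elim: dvdE)
  have "nat j = m * nat q" "nat (- j) = m * nat (- q)"
    unfolding q by (simp_all add: nat_mult_distrib flip: mult_minus_right)
  moreover have "inv s ^^ m = id"
    using inv_fn[OF assms(1), of m] assms(2) by simp
  ultimately show ?thesis
    using assms(2) by (simp add: fun_ipow_def funpow_mult[symmetric])
qed

lemma finite_order_imp_funpow_eq_id:
  assumes "bij s" "finite_order s"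
  obtains m where "m > 0" "s ^^ m = id"
proof -
  obtain n where n: "n \<noteq> 0" "fun_ipow s n = id"
    using assms(2) by (auto simp: finite_order_def)
  show ?thesis
  proof (cases "n > 0")
    case True
    thus ?thesis using n that[of "nat n"] by (simp add: fun_ipow_def)
  next
    case False
    hence "inv (s ^^ nat (- n)) = id"
      using n inv_fn[OF assms(1)] by (simp add: fun_ipow_def)
    hence "s ^^ nat (- n) = id"
      by (metis assms(1) bij_fn inv_id inv_inv_eq)
    thus ?thesis using False n(1) that[of "nat (- n)"] by simp
  qed
qed

abbreviation cp_support :: "(int \<Rightarrow> 'a \<Rightarrow> complex) \<Rightarrow> int set" where
  "cp_support F \<equiv> {n. F n \<noteq> (\<lambda>x. 0)}"

lemma fun_subalgebra_sum:
  assumes "fun_subalgebra A" "finite S" "\<forall>n\<in>S. h n \<in> A"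
  shows "(\<lambda>x. \<Sum>n\<in>S. h n x) \<in> A"
  using assms(2,3) by induction (use assms(1) in \<open>simp_all add: fun_subalgebra_def\<close>)

lemma comp_funpow_mem:
  assumes "\<forall>f\<in>A. f \<circ> g \<in> A" "f \<in> A"
  shows "f \<circ> g ^^ n \<in> A"
proof (induction n)
  case (Suc n)
  hence "(f \<circ> g ^^ n) \<circ> g \<in> A" using assms(1) by blast
  thus ?case by (simp only: funpow_Suc_right o_assoc)
qed (use assms(2) in simp)

lemma comp_fun_ipow_mem:
  assumes "\<forall>f\<in>A. sig_tilde s f \<in> A \<and> f \<circ> s \<in> A" "f \<in> A"
  shows "f \<circ> fun_ipow s j \<in> A"
proof -
  have "\<forall>f\<in>A. f \<circ> s \<in> A" "\<forall>f\<in>A. f \<circ> inv s \<in> A"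
    using assms(1) by (auto simp: sig_tilde_def)
  thus ?thesis
    using comp_funpow_mem[OF _ assms(2)] by (simp add: fun_ipow_def)
qed

lemma cp_embed_in_crossed_product:
  assumes "fun_subalgebra A" "f \<in> A"
  shows "cp_embed f \<in> crossed_product A"
proof -
  have "cp_support (cp_embed f) \<subseteq> {0}" by (auto simp: cp_embed_def)
  hence "finite (cp_support (cp_embed f))" by (rule finite_subset) simp
  thus ?thesis using assms by (auto simp: crossed_product_def cp_embed_def fun_subalgebra_def)
qed

lemma cp_mult_embed_left: "cp_mult s (cp_embed f) G = (\<lambda>k x. f x * G k x)"
proof (cases "f = (\<lambda>x. 0)")
  case True
  hence "cp_support (cp_embed f) = {}" by (auto simp: cp_embed_def)
  thus ?thesis using True by (simp add: cp_mult_def)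
next
  case False
  hence "cp_support (cp_embed f) = {0}" by (auto simp: cp_embed_def)
  thus ?thesis by (simp add: cp_mult_def cp_embed_def sig_tilde_pow_def)
qed

lemma cp_mult_embed_right:
  assumes "finite (cp_support F)"
  shows "cp_mult s F (cp_embed g) = (\<lambda>k x. F k x * g (fun_ipow s (- k) x))"
proof (intro ext)
  fix k x
  have "cp_mult s F (cp_embed g) k x =
        (\<Sum>n\<in>cp_support F. if n = k then F k x * g (fun_ipow s (- k) x) else 0)"
    unfolding cp_mult_def by (rule sum.cong) (auto simp: cp_embed_def sig_tilde_pow_def)
  also have "\<dots> = F k x * g (fun_ipow s (- k) x)"
    using assms by (simp add: sum.delta)
  finally show "cp_mult s F (cp_embed g) k x = F k x * g (fun_ipow s (- k) x)" .
qed

lemma cp_commutative_embed: "cp_commutative s (cp_embed ` A)"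
  unfolding cp_commutative_def
  by (clarsimp simp: cp_mult_embed_left) (simp add: cp_embed_def fun_eq_iff)

lemma cp_mult_coeff_nonzero:
  assumes "cp_mult s F G k \<noteq> (\<lambda>x. 0)"
  shows "\<exists>n\<in>cp_support F. G (k - n) \<noteq> (\<lambda>x. 0)"
proof (rule ccontr)
  assume "\<not> ?thesis"
  hence "cp_mult s F G k = (\<lambda>x. 0)"
    unfolding cp_mult_def sig_tilde_pow_def by (intro ext sum.neutral ballI) auto
  thus False using assms by simp
qed

lemma cp_mult_closed:
  assumes A: "fun_subalgebra A" and inv: "\<forall>f\<in>A. sig_tilde s f \<in> A \<and> f \<circ> s \<in> A"
    and "F \<in> crossed_product A" "G \<in> crossed_product A"
  shows "cp_mult s F G \<in> crossed_product A"
proof -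
  have fin: "finite (cp_support F)" "finite (cp_support G)" and "\<forall>n. F n \<in> A" "\<forall>n. G n \<in> A"
    using assms(3,4) by (auto simp: crossed_product_def)
  have "cp_support (cp_mult s F G) \<subseteq> (\<lambda>(a, b). a + b) ` (cp_support F \<times> cp_support G)"
  proof
    fix k assume "k \<in> cp_support (cp_mult s F G)"
    then obtain n where "n \<in> cp_support F" "G (k - n) \<noteq> (\<lambda>x. 0)"
      using cp_mult_coeff_nonzero by blast
    thus "k \<in> (\<lambda>(a, b). a + b) ` (cp_support F \<times> cp_support G)"
      by (intro image_eqI[of _ _ "(n, k - n)"]) auto
  qed
  hence "finite (cp_support (cp_mult s F G))"
    by (rule finite_subset) (use fin in auto)
  moreover have "(\<lambda>x. F n x * (G (k - n) \<circ> fun_ipow s (- n)) x) \<in> A" for n k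
    using A comp_fun_ipow_mem[OF inv] \<open>\<forall>n. F n \<in> A\<close> \<open>\<forall>n. G n \<in> A\<close>
    unfolding fun_subalgebra_def by blast
  hence "cp_mult s F G k \<in> A" for k
    unfolding cp_mult_def sig_tilde_pow_def by (intro fun_subalgebra_sum[OF A fin(1)]) blast
  ultimately show ?thesis by (simp add: crossed_product_def)
qed

definition crossed_product_multiples :: "('a \<Rightarrow> complex) set \<Rightarrow> int \<Rightarrow> (int \<Rightarrow> 'a \<Rightarrow> complex) set" where
  "crossed_product_multiples A m = {F \<in> crossed_product A. \<forall>k. \<not> m dvd k \<longrightarrow> F k = (\<lambda>x. 0)}"

lemma cp_subalgebra_crossed_product_multiples:
  assumes A: "fun_subalgebra A" and inv: "\<forall>f\<in>A. sig_tilde s f \<in> A \<and> f \<circ> s \<in> A"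
  shows "cp_subalgebra s A (crossed_product_multiples A m)"
  unfolding cp_subalgebra_def
proof (intro conjI ballI allI)
  show "crossed_product_multiples A m \<subseteq> crossed_product A"
    by (auto simp: crossed_product_multiples_def)
  show "(\<lambda>n x. 0) \<in> crossed_product_multiples A m"
    using A by (simp add: crossed_product_multiples_def crossed_product_def fun_subalgebra_def)
next
  fix F G assume F: "F \<in> crossed_product_multiples A m" and G: "G \<in> crossed_product_multiples A m"
  hence "finite (cp_support F)" "finite (cp_support G)" "\<forall>n. F n \<in> A" "\<forall>n. G n \<in> A"
    by (auto simp: crossed_product_multiples_def crossed_product_def)
  hence "finite (cp_support (\<lambda>n x. F n x + G n x))" "\<forall>n. (\<lambda>x. F n x + G n x) \<in> A"
    using A by (auto simp: fun_subalgebra_def intro: finite_subset[of _ "cp_support F \<union> cp_support G"])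
  thus "(\<lambda>n x. F n x + G n x) \<in> crossed_product_multiples A m"
    using F G by (auto simp: crossed_product_multiples_def crossed_product_def)
  have "cp_mult s F G k = (\<lambda>x. 0)" if "\<not> m dvd k" for k
  proof (rule ccontr)
    assume "cp_mult s F G k \<noteq> (\<lambda>x. 0)"
    then obtain n where "F n \<noteq> (\<lambda>x. 0)" "G (k - n) \<noteq> (\<lambda>x. 0)"
      using cp_mult_coeff_nonzero by blast
    hence "m dvd n" "m dvd k - n" using F G by (auto simp: crossed_product_multiples_def)
    thus False using that by (metis dvd_add diff_add_cancel)
  qed
  moreover have "cp_mult s F G \<in> crossed_product A"
    using cp_mult_closed[OF A inv] F G by (auto simp: crossed_product_multiples_def)
  ultimately show "cp_mult s F G \<in> crossed_product_multiples A m"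
    by (simp add: crossed_product_multiples_def)
next
  fix c F assume F: "F \<in> crossed_product_multiples A m"
  hence "finite (cp_support (\<lambda>n x. c * F n x))" "\<forall>n. (\<lambda>x. c * F n x) \<in> A"
    using A by (auto simp: crossed_product_multiples_def crossed_product_def fun_subalgebra_def
        intro: finite_subset[of _ "cp_support F"])
  thus "(\<lambda>n x. c * F n x) \<in> crossed_product_multiples A m"
    using F by (auto simp: crossed_product_multiples_def crossed_product_def)
qed

lemma cp_mult_eq_convolution:
  assumes "\<forall>n\<in>cp_support F. fun_ipow s (- n) = id"
  shows "cp_mult s F G k x = (\<Sum>n\<in>cp_support F. F n x * G (k - n) x)"
  unfolding cp_mult_def sig_tilde_pow_def using assms by (intro sum.cong) auto

lemma convolution_commute:
  assumes "finite (cp_support F)" "finite (cp_support G)"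
  shows "(\<Sum>n\<in>cp_support F. F n x * G (k - n) x) = (\<Sum>n\<in>cp_support G. G n x * F (k - n) x)"
proof -
  define S where "S = cp_support F \<union> (\<lambda>j. k - j) ` cp_support G"
  have "finite S" using assms by (simp add: S_def)
  have off_image: "G (k - i) x = 0" if "i \<notin> (\<lambda>j. k - j) ` cp_support G" for i
  proof -
    have "k - i \<notin> cp_support G" using that by force
    thus ?thesis by simp
  qed
  have "(\<Sum>n\<in>cp_support F. F n x * G (k - n) x) = (\<Sum>n\<in>S. F n x * G (k - n) x)"
    by (rule sum.mono_neutral_left[OF \<open>finite S\<close>]) (auto simp: S_def)
  also have "\<dots> = (\<Sum>n\<in>(\<lambda>j. k - j) ` cp_support G. F n x * G (k - n) x)"
    by (rule sum.mono_neutral_right[OF \<open>finite S\<close>]) (auto simp: S_def off_image)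
  also have "\<dots> = (\<Sum>n\<in>cp_support G. G n x * F (k - n) x)"
    by (subst sum.reindex) (auto simp: inj_on_def mult.commute)
  finally show ?thesis .
qed

lemma cp_commutative_crossed_product_multiples:
  assumes "bij s" "s ^^ m = id"
  shows "cp_commutative s (crossed_product_multiples A (int m))"
  unfolding cp_commutative_def
proof (intro ballI ext)
  fix F G k x
  assume F: "F \<in> crossed_product_multiples A (int m)" and G: "G \<in> crossed_product_multiples A (int m)"
  have trivial_action: "\<forall>n\<in>cp_support H. fun_ipow s (- n) = id"
    if "H \<in> crossed_product_multiples A (int m)" for H
  proof
    fix n assume "n \<in> cp_support H"
    hence "int m dvd - n" using that by (auto simp: crossed_product_multiples_def)
    thus "fun_ipow s (- n) = id" by (rule fun_ipow_eq_id_if_dvd[OF assms])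
  qed
  have "finite (cp_support F)" "finite (cp_support G)"
    using F G by (auto simp: crossed_product_multiples_def crossed_product_def)
  thus "cp_mult s F G k x = cp_mult s G F k x"
    using cp_mult_eq_convolution[OF trivial_action[OF F]] cp_mult_eq_convolution[OF trivial_action[OF G]]
      convolution_commute by simp
qed

lemma finite_order_imp_not_maximal_abelian:
  assumes "bij s" "finite_order s"
    and A: "fun_subalgebra A" and inv: "\<forall>f\<in>A. sig_tilde s f \<in> A \<and> f \<circ> s \<in> A"
    and "f \<in> A" "f \<noteq> (\<lambda>x. 0)"
  shows "\<not> maximal_abelian s A"
proof
  assume max: "maximal_abelian s A"
  obtain m where "m > 0" "s ^^ m = id"
    using finite_order_imp_funpow_eq_id[OF assms(1,2)] .
  define B where "B = crossed_product_multiples A (int m)"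
  have "cp_embed ` A \<subseteq> B"
    using cp_embed_in_crossed_product[OF A] by (auto simp: B_def crossed_product_multiples_def cp_embed_def)
  define F where "F = (\<lambda>k. if k = int m then f else (\<lambda>x. 0))"
  have "finite (cp_support F)"
    by (rule finite_subset[of _ "{int m}"]) (auto simp: F_def)
  moreover have "\<forall>k. F k \<in> A" using assms(5) A by (simp add: F_def fun_subalgebra_def)
  ultimately have "F \<in> B"
    by (simp add: B_def F_def crossed_product_multiples_def crossed_product_def)
  moreover have "F \<notin> cp_embed ` A"
  proof
    assume "F \<in> cp_embed ` A"
    then obtain g where "F (int m) = cp_embed g (int m)" by blast
    thus False using \<open>m > 0\<close> assms(6) by (simp add: F_def cp_embed_def)
  qed
  moreover have "B = cp_embed ` A"
    using max cp_subalgebra_crossed_product_multiples[OF A inv]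
      cp_commutative_crossed_product_multiples[OF assms(1) \<open>s ^^ m = id\<close>] \<open>cp_embed ` A \<subseteq> B\<close>
    unfolding maximal_abelian_def B_def by blast
  ultimately show False by blast
qed

lemma cp_commutant_coeff_vanishes:
  assumes "separates_points A" "finite (cp_support F)"
    and "\<forall>g\<in>A. cp_mult s F (cp_embed g) = cp_mult s (cp_embed g) F"
    and "fun_ipow s (- k) x \<noteq> x"
  shows "F k x = 0"
proof -
  obtain g where "g \<in> A" "g (fun_ipow s (- k) x) \<noteq> g x"
    using assms(1,4) by (auto simp: separates_points_def)
  have "F k x * g (fun_ipow s (- k) x) = g x * F k x"
    using fun_cong[OF fun_cong[OF assms(3)[rule_format, OF \<open>g \<in> A\<close>]], of k x]
    by (simp only: cp_mult_embed_right[OF assms(2)] cp_mult_embed_left)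
  hence "F k x * (g (fun_ipow s (- k) x) - g x) = 0" by (simp add: algebra_simps)
  thus ?thesis using \<open>g (fun_ipow s (- k) x) \<noteq> g x\<close> by simp
qed

lemma cp_commutant_subset_embed:
  fixes At :: "('a::t2_space, 'n::finite) chart set"
  assumes "holo_atlas At" "connected (UNIV :: 'a set)" "\<forall>f\<in>A. holo_fun At f"
    and "separates_points A" "continuous_on UNIV s" "continuous_on UNIV (inv s)"
    and "\<not> finite_order s"
    and "F \<in> crossed_product A" "\<forall>g\<in>A. cp_mult s F (cp_embed g) = cp_mult s (cp_embed g) F"
  shows "F \<in> cp_embed ` A"
proof -
  have fin: "finite (cp_support F)" and "\<forall>n. F n \<in> A"
    using assms(8) by (auto simp: crossed_product_def)
  have "F k = (\<lambda>x. 0)" if "k \<noteq> 0" for k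
  proof -
    define V where "V = {x. fun_ipow s (- k) x \<noteq> x}"
    have "open V"
      unfolding V_def
      using open_Collect_neq[OF continuous_on_fun_ipow[OF assms(5,6)] continuous_on_id] by simp
    have "- k \<noteq> 0" using that by simp
    hence "fun_ipow s (- k) \<noteq> id"
      using assms(7) unfolding finite_order_def by blast
    hence "V \<noteq> {}" by (auto simp: V_def fun_eq_iff)
    have "\<forall>x\<in>V. F k x = 0"
      using cp_commutant_coeff_vanishes[OF assms(4) fin assms(9)] by (simp add: V_def)
    moreover have "holo_fun At (F k)" using assms(3) \<open>\<forall>n. F n \<in> A\<close> by blast
    ultimately show ?thesis
      using holo_fun_analytic_continuation[OF assms(1,2) _ \<open>open V\<close> \<open>V \<noteq> {}\<close>] by blast
  qed
  hence "F = cp_embed (F 0)" by (auto simp: cp_embed_def fun_eq_iff)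
  thus ?thesis using \<open>\<forall>n. F n \<in> A\<close> by blast
qed

lemma not_finite_order_imp_maximal_abelian:
  fixes At :: "('a::t2_space, 'n::finite) chart set"
  assumes "holo_atlas At" "connected (UNIV :: 'a set)" "\<forall>f\<in>A. holo_fun At f"
    and "separates_points A" "continuous_on UNIV s" "continuous_on UNIV (inv s)"
    and "\<not> finite_order s"
  shows "maximal_abelian s A"
  unfolding maximal_abelian_def
proof (intro conjI allI impI cp_commutative_embed)
  fix B assume B: "cp_subalgebra s A B \<and> cp_commutative s B \<and> cp_embed ` A \<subseteq> B"
  show "B = cp_embed ` A"
  proof
    show "B \<subseteq> cp_embed ` A"
    proof
      fix F assume "F \<in> B"
      hence "F \<in> crossed_product A" using B by (auto simp: cp_subalgebra_def)
      moreover have "\<forall>g\<in>A. cp_mult s F (cp_embed g) = cp_mult s (cp_embed g) F"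
        using \<open>F \<in> B\<close> B by (auto simp: cp_commutative_def)
      ultimately show "F \<in> cp_embed ` A" by (rule cp_commutant_subset_embed[OF assms])
    qed
  qed (use B in blast)
qed

lemma holo_atlas_separates_points_nonzero:
  fixes At :: "('a::topological_space, 'n::finite) chart set" and A :: "('a \<Rightarrow> complex) set"
  assumes "holo_atlas At" "separates_points A"
  obtains f where "f \<in> A" "f \<noteq> (\<lambda>x. 0)"
proof -
  fix p :: 'a
  obtain U \<phi> \<psi> where "(U, \<phi>) \<in> At" "p \<in> U" "open U" "open (\<phi> ` U)"
    "homeomorphism U (\<phi> ` U) \<phi> \<psi>"
    by (rule holo_atlas_chart_at[OF assms(1)])
  moreover have "\<not> open {\<phi> p}" by (rule not_open_singleton)
  ultimately have "\<phi> ` U \<noteq> {\<phi> p}" by auto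
  then obtain q where "\<phi> q \<noteq> \<phi> p" using \<open>p \<in> U\<close> by auto
  hence "q \<noteq> p" by auto
  then obtain f where "f \<in> A" "f q \<noteq> f p"
    using assms(2) unfolding separates_points_def by blast
  hence "f \<noteq> (\<lambda>x. 0)" by auto
  with \<open>f \<in> A\<close> show ?thesis by (rule that)
qed

theorem corollary3p12:
  fixes At :: "('a::{t2_space, second_countable_topology}, 'n::finite) chart set"
    and \<sigma> :: "'a \<Rightarrow> 'a"
    and A :: "('a \<Rightarrow> complex) set"
  assumes "connected_complex_manifold At"
    and "biholomorphic At \<sigma>"
    and "fun_subalgebra A"
    and "\<forall>f\<in>A. holo_fun At f"
    and "separates_points A"
    and "\<forall>f\<in>A. sig_tilde \<sigma> f \<in> A \<and> f \<circ> \<sigma> \<in> A"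
  shows "maximal_abelian \<sigma> A \<longleftrightarrow> \<not> finite_order \<sigma>"
proof -
  have atlas: "holo_atlas At" and conn: "connected (UNIV :: 'a set)"
    using assms(1) by (auto simp: connected_complex_manifold_def)
  have "bij \<sigma>" and cont: "continuous_on UNIV \<sigma>" "continuous_on UNIV (inv \<sigma>)"
    using assms(2) by (auto simp: biholomorphic_def holo_map_def)
  obtain f where f: "f \<in> A" "f \<noteq> (\<lambda>x. 0)"
    using holo_atlas_separates_points_nonzero[OF atlas assms(5)] .
  show ?thesis
    using finite_order_imp_not_maximal_abelian[OF \<open>bij \<sigma>\<close> _ assms(3,6) f]
      not_finite_order_imp_maximal_abelian[OF atlas conn assms(4,5) cont]
    by blast
qed

end
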